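(* Let $(\alpha_n,\beta_n)$ be a Bailey pair relative to $a$. Define $\alpha^*_0=\beta^*_0=1$ and, for $n\ge1$, \[ \alpha^*_n = (aq^{n}+q^{-n})\alpha_n,\qquad \beta^*_n =\frac{(1+aq^{2n})\beta_n-\beta_{n-1}}{q^{n}}-\frac{a}{(aq,q;q)_{n}}. \] Then $(\alpha^*_n,\beta^*_n)$ is a Bailey pair relative to $a$.
   Context: Notation: $(x;q)_n=\prod_{i=0}^{n-1}(1-xq^i)$, $(x_1,\dots,x_j;q)_n=(x_1;q)_n\cdots(x_j;q)_n$. A pair of sequences $(\alpha_n,\beta_n)_{n\ge0}$ is a Bailey pair relative to $a$ if $\alpha_0=1$ and for all $n\ge0$, $\beta_n=\sum_{r=0}^n\frac{\alpha_r}{(q;q)_{n-r}(aq;q)_{n+r}}$. Parameters are assumed generic so that no denominator vanishes. *)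

theory Defs
  imports Main
begin

definition qpoch :: "'a::field \<Rightarrow> 'a \<Rightarrow> nat \<Rightarrow> 'a" where
  "qpoch x q n = (\<Prod>i<n. 1 - x * q ^ i)"

definition bailey_pair :: "'a::field \<Rightarrow> 'a \<Rightarrow> (nat \<Rightarrow> 'a) \<Rightarrow> (nat \<Rightarrow> 'a) \<Rightarrow> bool" where
  "bailey_pair q a alpha beta \<longleftrightarrow>
     alpha 0 = 1 \<and>
     (\<forall>n. beta n = (\<Sum>r=0..n. alpha r / (qpoch q q (n - r) * qpoch (a * q) q (n + r))))"

end

theory Submission
  imports Defs
begin

text \<open>Multiplying the defining sum of beta(n-1) termwise by (1 - q^(n-r))(1 - a q^(n+r))
  puts it over the same denominators (q;q)_(n-r) (aq;q)_(n+r) as beta(n), with a vanishing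
  extra term r = n. The identity (1 + a q^(2n)) - (1 - q^(n-r))(1 - a q^(n+r)) = q^n (a q^r + q^(-r))
  then exhibits ((1 + a q^(2n)) beta(n) - beta(n-1)) / q^n as the Bailey transform of
  (a q^r + q^(-r)) alpha(r); subtracting a / ((aq;q)_n (q;q)_n) replaces the r = 0 coefficient
  a + 1 by 1.\<close>

lemma qpoch_0 [simp]: "qpoch x q 0 = 1"
  by (simp add: qpoch_def)

lemma qpoch_Suc: "qpoch x q (Suc n) = qpoch x q n * (1 - x * q ^ n)"
  by (simp add: qpoch_def)

lemma bailey_pair_beta:
  "bailey_pair q a alpha beta \<Longrightarrow>
     beta n = (\<Sum>r=0..n. alpha r / (qpoch q q (n - r) * qpoch (a * q) q (n + r)))"
  by (simp add: bailey_pair_def)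

lemma bailey_kernel_Suc:
  fixes q a :: "'a::field"
  assumes "\<And>n. qpoch q q n \<noteq> 0" and "\<And>n. qpoch (a * q) q n \<noteq> 0" and "r \<le> n"
  shows "(1 - q ^ (Suc n - r)) * (1 - a * q ^ (Suc n + r))
           / (qpoch q q (Suc n - r) * qpoch (a * q) q (Suc n + r))
         = 1 / (qpoch q q (n - r) * qpoch (a * q) q (n + r))"
proof -
  have P: "qpoch q q (Suc n - r) = qpoch q q (n - r) * (1 - q ^ (Suc n - r))"
    using \<open>r \<le> n\<close> by (simp add: Suc_diff_le qpoch_Suc)
  have Q: "qpoch (a * q) q (Suc n + r) = qpoch (a * q) q (n + r) * (1 - a * q ^ (Suc n + r))"
    by (simp add: qpoch_Suc mult.assoc)
  have "1 - q ^ (Suc n - r) \<noteq> 0" "1 - a * q ^ (Suc n + r) \<noteq> 0"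
    using assms(1)[of "Suc n - r"] assms(2)[of "Suc n + r"] unfolding P Q by auto
  then show ?thesis
    unfolding P Q by (simp add: ac_simps)
qed

lemma bailey_pair_beta_pred:
  fixes q a :: "'a::field"
  assumes "\<And>n. qpoch q q n \<noteq> 0" and "\<And>n. qpoch (a * q) q n \<noteq> 0"
    and "bailey_pair q a alpha beta"
  shows "beta n = (\<Sum>r=0..Suc n. alpha r * ((1 - q ^ (Suc n - r)) * (1 - a * q ^ (Suc n + r)))
                     / (qpoch q q (Suc n - r) * qpoch (a * q) q (Suc n + r)))"
proof -
  have "(\<Sum>r=0..Suc n. alpha r * ((1 - q ^ (Suc n - r)) * (1 - a * q ^ (Suc n + r)))
                     / (qpoch q q (Suc n - r) * qpoch (a * q) q (Suc n + r)))
      = (\<Sum>r=0..n. alpha r * ((1 - q ^ (Suc n - r)) * (1 - a * q ^ (Suc n + r)))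
                     / (qpoch q q (Suc n - r) * qpoch (a * q) q (Suc n + r)))"
    by (simp add: sum.atLeast0_atMost_Suc)
  also have "\<dots> = (\<Sum>r=0..n. alpha r / (qpoch q q (n - r) * qpoch (a * q) q (n + r)))"
  proof (rule sum.cong)
    fix r assume "r \<in> {0..n}"
    then show "alpha r * ((1 - q ^ (Suc n - r)) * (1 - a * q ^ (Suc n + r)))
                 / (qpoch q q (Suc n - r) * qpoch (a * q) q (Suc n + r))
               = alpha r / (qpoch q q (n - r) * qpoch (a * q) q (n + r))"
      using bailey_kernel_Suc[OF assms(1,2), of r n]
      by (metis atLeastAtMost_iff times_divide_eq_left times_divide_eq_right mult.right_neutral)
  qed simp
  finally show ?thesis
    using bailey_pair_beta[OF assms(3)] by simp
qed

lemma bailey_weight_identity: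
  fixes q a :: "'a::field"
  assumes "q \<noteq> 0" and "r \<le> n"
  shows "(1 + a * q ^ (2 * n)) - (1 - q ^ (n - r)) * (1 - a * q ^ (n + r))
         = q ^ n * (a * q ^ r + inverse (q ^ r))"
proof -
  have "q ^ (n - r) = q ^ n * inverse (q ^ r)"
    using assms by (simp add: power_diff field_simps)
  moreover have "q ^ (2 * n) = q ^ (n + r) * q ^ n * inverse (q ^ r)"
    using assms(1) by (simp add: mult_2 power_add)
  ultimately show ?thesis
    using assms(1) by (simp add: power_add field_simps)
qed

lemma bailey_pair_beta_combination:
  fixes q a :: "'a::field"
  assumes "q \<noteq> 0" and "\<And>n. qpoch q q n \<noteq> 0" and "\<And>n. qpoch (a * q) q n \<noteq> 0"
    and "bailey_pair q a alpha beta" and "n \<ge> 1"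
  shows "((1 + a * q ^ (2 * n)) * beta n - beta (n - 1)) / q ^ n
         = (\<Sum>r=0..n. (a * q ^ r + inverse (q ^ r)) * alpha r
                        / (qpoch q q (n - r) * qpoch (a * q) q (n + r)))"
proof -
  define D where "D r = qpoch q q (n - r) * qpoch (a * q) q (n + r)" for r
  have "D r \<noteq> 0" for r
    using assms(2,3) by (simp add: D_def)
  have pred: "beta (n - 1) = (\<Sum>r=0..n. alpha r * ((1 - q ^ (n - r)) * (1 - a * q ^ (n + r))) / D r)"
    using bailey_pair_beta_pred[OF assms(2-4), of "n - 1"] \<open>n \<ge> 1\<close> by (simp add: D_def)
  have "(1 + a * q ^ (2 * n)) * beta n - beta (n - 1)
      = (\<Sum>r=0..n. ((1 + a * q ^ (2 * n)) - (1 - q ^ (n - r)) * (1 - a * q ^ (n + r))) * alpha r / D r)"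
    unfolding pred bailey_pair_beta[OF assms(4), of n] D_def[symmetric]
      sum_distrib_left sum_subtractf[symmetric]
    by (rule sum.cong) (simp_all add: \<open>\<And>r. D r \<noteq> 0\<close> field_simps)
  also have "\<dots> = q ^ n * (\<Sum>r=0..n. (a * q ^ r + inverse (q ^ r)) * alpha r / D r)"
    unfolding sum_distrib_left
    by (rule sum.cong) (simp_all add: bailey_weight_identity[OF assms(1)])
  finally show ?thesis
    using assms(1) by (simp add: D_def)
qed

theorem mainTheorem2:
  fixes q a :: "'a::field" and alpha beta :: "nat \<Rightarrow> 'a"
  assumes "q \<noteq> 0"
    and "\<And>n. qpoch q q n \<noteq> 0"
    and "\<And>n. qpoch (a * q) q n \<noteq> 0"
    and "bailey_pair q a alpha beta"
  shows "bailey_pair q a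
           (\<lambda>n. if n = 0 then 1 else (a * q ^ n + inverse (q ^ n)) * alpha n)
           (\<lambda>n. if n = 0 then 1 else
                 ((1 + a * q ^ (2 * n)) * beta n - beta (n - 1)) / q ^ n
                 - a / (qpoch (a * q) q n * qpoch q q n))"
  unfolding bailey_pair_def
proof (intro conjI allI)
  fix n :: nat
  define D where "D r = qpoch q q (n - r) * qpoch (a * q) q (n + r)" for r
  have alpha0: "alpha 0 = 1"
    using assms(4) by (simp add: bailey_pair_def)
  have "(\<Sum>r=0..n. (if r = 0 then 1 else (a * q ^ r + inverse (q ^ r)) * alpha r) / D r)
      = (\<Sum>r=0..n. (a * q ^ r + inverse (q ^ r)) * alpha r / D r - (if r = 0 then a / D 0 else 0))"
    by (rule sum.cong) (auto simp: alpha0 add_divide_distrib)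
  also have "\<dots> = (\<Sum>r=0..n. (a * q ^ r + inverse (q ^ r)) * alpha r / D r) - a / D 0"
    by (simp add: sum_subtractf)
  finally show "(if n = 0 then 1 else ((1 + a * q ^ (2 * n)) * beta n - beta (n - 1)) / q ^ n
                   - a / (qpoch (a * q) q n * qpoch q q n))
              = (\<Sum>r=0..n. (if r = 0 then 1 else (a * q ^ r + inverse (q ^ r)) * alpha r) / D r)"
    using bailey_pair_beta_combination[OF assms, of n]
    by (cases "n = 0") (simp_all add: D_def mult.commute)
qed simp

end
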